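(* Let $n\geq 3$, $p,q>0$ with $pq>1$, $\alpha\in(0,n)$ and $\sigma_1,\sigma_2\in[0,\alpha)$, and let $u,v$ be bounded positive solutions of $$u(x)=\int_{\mathbb{R}^n}\frac{v(y)^q}{|x-y|^{n-\alpha}|y|^{\sigma_1}}\,dy,\qquad v(x)=\int_{\mathbb{R}^n}\frac{u(y)^p}{|x-y|^{n-\alpha}|y|^{\sigma_2}}\,dy,\qquad x\in\mathbb{R}^n.$$ Then: (i) For any $\theta_1<q_0$ and $\theta_2<p_0$, there does not exist a constant $c>0$ such that either $u(x)\geq c(1+|x|)^{-\theta_1}$ (for all $x$) or $v(x)\geq c(1+|x|)^{-\theta_2}$ (for all $x$). (ii) If $u,v$ are not integrable solutions, then for any $\theta_3>q_0$ and $\theta_4>p_0$ there does not exist a constant $C>0$ such that either $u(x)\leq C(1+|x|)^{-\theta_3}$ or $v(x)\leq C(1+|x|)^{-\theta_4}$. (iii) If $u,v$ are not integrable solutions but are decaying solutions, then $u(x)\simeq|x|^{-q_0}$ and $v(x)\simeq|x|^{-p_0}$ as $|x|\to\infty$.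
   Context: Define $$p_0=\frac{\alpha(1+p)-(\sigma_2+\sigma_1p)}{pq-1},\qquad q_0=\frac{\alpha(1+q)-(\sigma_1+\sigma_2q)}{pq-1},\qquad r_0=\frac{n}{q_0},\qquad s_0=\frac{n}{p_0}.$$ A positive solution $u,v$ is integrable if $u\in L^{r_0}(\mathbb{R}^n)$ and $v\in L^{s_0}(\mathbb{R}^n)$. The notation $f(x)\simeq g(x)$ means there exist constants $c,C>0$ with $cg(x)\leq f(x)\leq Cg(x)$ as $|x|\to\infty$. A positive solution is decaying if $u(x)\simeq|x|^{-\theta_1}$ and $v(x)\simeq|x|^{-\theta_2}$ for some $\theta_1,\theta_2>0$. *)

theory Defs
  imports "HOL-Analysis.Analysis"
begin

definition p0 :: "real \<Rightarrow> real \<Rightarrow> real \<Rightarrow> real \<Rightarrow> real \<Rightarrow> real" where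
  "p0 \<alpha> \<sigma>1 \<sigma>2 p q = (\<alpha> * (1 + p) - (\<sigma>2 + \<sigma>1 * p)) / (p * q - 1)"

definition q0 :: "real \<Rightarrow> real \<Rightarrow> real \<Rightarrow> real \<Rightarrow> real \<Rightarrow> real" where
  "q0 \<alpha> \<sigma>1 \<sigma>2 p q = (\<alpha> * (1 + q) - (\<sigma>1 + \<sigma>2 * q)) / (p * q - 1)"

definition is_solution ::
  "real \<Rightarrow> real \<Rightarrow> real \<Rightarrow> real \<Rightarrow> real \<Rightarrow> (real^'n \<Rightarrow> real) \<Rightarrow> (real^'n \<Rightarrow> real) \<Rightarrow> bool" where
  "is_solution \<alpha> \<sigma>1 \<sigma>2 p q u v \<longleftrightarrow>
     u \<in> borel_measurable lborel \<and> v \<in> borel_measurable lborel \<and>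
     (\<forall>x. ennreal (u x) = (\<integral>\<^sup>+ y. ennreal (v y powr q /
          (norm (x - y) powr (real CARD('n) - \<alpha>) * norm y powr \<sigma>1)) \<partial>lborel)) \<and>
     (\<forall>x. ennreal (v x) = (\<integral>\<^sup>+ y. ennreal (u y powr p /
          (norm (x - y) powr (real CARD('n) - \<alpha>) * norm y powr \<sigma>2)) \<partial>lborel))"

definition integrable_solution ::
  "real \<Rightarrow> real \<Rightarrow> real \<Rightarrow> real \<Rightarrow> real \<Rightarrow> (real^'n \<Rightarrow> real) \<Rightarrow> (real^'n \<Rightarrow> real) \<Rightarrow> bool" where
  "integrable_solution \<alpha> \<sigma>1 \<sigma>2 p q u v \<longleftrightarrow>
     (\<integral>\<^sup>+ x. ennreal (\<bar>u x\<bar> powr (real CARD('n) / q0 \<alpha> \<sigma>1 \<sigma>2 p q)) \<partial>lborel) < \<infinity> \<and>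
     (\<integral>\<^sup>+ x. ennreal (\<bar>v x\<bar> powr (real CARD('n) / p0 \<alpha> \<sigma>1 \<sigma>2 p q)) \<partial>lborel) < \<infinity>"

definition asymp_comparable :: "('a::real_normed_vector \<Rightarrow> real) \<Rightarrow> ('a \<Rightarrow> real) \<Rightarrow> bool" where
  "asymp_comparable f g \<longleftrightarrow> (\<exists>c>0. \<exists>C>0. \<forall>\<^sub>F x in at_infinity. c * g x \<le> f x \<and> f x \<le> C * g x)"

definition decaying_solution :: "('a::real_normed_vector \<Rightarrow> real) \<Rightarrow> ('a \<Rightarrow> real) \<Rightarrow> bool" where
  "decaying_solution u v \<longleftrightarrow> (\<exists>\<theta>1>0. \<exists>\<theta>2>0.
     asymp_comparable u (\<lambda>x. norm x powr (-\<theta>1)) \<and> asymp_comparable v (\<lambda>x. norm x powr (-\<theta>2)))"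

end

theory Submission
  imports Defs "HOL-Real_Asymp.Real_Asymp"
begin

text \<open>
  A weighted Riesz potential of a function that is bounded below by \<open>|y| powr -b\<close> near
  infinity is itself bounded below by \<open>|x| powr -(b + \<sigma> - \<alpha>)\<close>. Hence a lower bound
  \<open>u \<ge> c |x| powr -e\<close> passes through both equations of the system and returns as
  \<open>u \<ge> c' |x| powr -e'\<close> with \<open>q0 - e' = p q (q0 - e)\<close>: the exponent \<open>q0\<close> is a repelling
  fixed point. Since \<open>p q > 1\<close>, any \<open>e < q0\<close> is driven below \<open>0\<close>, which contradicts the
  boundedness of \<open>u\<close>; this gives (i).

  For (ii), an upper bound \<open>u \<le> C |x| powr -\<theta>\<close> with \<open>\<theta> > q0\<close> puts \<open>u\<close> in \<open>L^(n/q0)\<close>.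
  Every positive solution satisfies \<open>v \<ge> c |x| powr -(n - \<alpha>)\<close>, so \<open>p0 \<ge> n - \<alpha>\<close> would give
  \<open>u \<ge> c' |x| powr -q0\<close>; hence \<open>p0 < n - \<alpha>\<close>. Splitting the Riesz kernel into a dyadic
  decomposition then yields \<open>v \<le> C' |x| powr -\<gamma>\<close> for some \<open>\<gamma> > p0\<close>, so \<open>v\<close> lies in
  \<open>L^(n/p0)\<close> and the solution is integrable.

  Part (iii) combines the two: the decay exponent of \<open>u\<close> can lie neither below nor above
  \<open>q0\<close>, and likewise for \<open>v\<close> and \<open>p0\<close>.
\<close>

section \<open>Power functions at infinity\<close>

lemma bounded_not_eventually_ge_powr:
  fixes f :: "'a::{real_normed_vector,perfect_space} \<Rightarrow> real"
  assumes "bounded (range f)" "c > 0" "e > 0"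
  shows "\<not> (\<forall>\<^sub>F x in at_infinity. c * norm x powr e \<le> f x)"
proof
  assume lower: "\<forall>\<^sub>F x in at_infinity. c * norm x powr e \<le> f x"
  obtain M where M: "\<And>x. f x \<le> M"
    using assms(1) unfolding bounded_iff by (metis abs_le_D1 rangeI real_norm_def)
  have "filterlim (\<lambda>t::real. c * t powr e) at_top at_top"
    using assms by real_asymp
  then have "filterlim (\<lambda>x::'a. c * norm x powr e) at_top at_infinity"
    using filterlim_compose filterlim_norm_at_top by blast
  then have "\<forall>\<^sub>F x::'a in at_infinity. M < c * norm x powr e"
    unfolding filterlim_at_top_dense by blast
  with lower have "\<forall>\<^sub>F x::'a in at_infinity. False"
    by eventually_elim (metis M not_le order_trans)
  then show False
    using trivial_limit_at_infinity[where 'a='a] by (simp add: trivial_limit_def)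
qed

lemma eventually_powr_le_powr_imp_le:
  fixes c C a b :: real
  assumes "c > 0" "C > 0"
    and le: "\<forall>\<^sub>F x::'a::{real_normed_vector,perfect_space} in at_infinity.
           c * norm x powr (-a) \<le> C * norm x powr (-b)"
  shows "b \<le> a"
proof (rule ccontr)
  assume "\<not> b \<le> a"
  have "\<forall>\<^sub>F x::'a in at_infinity. norm x > 0"
    by (auto simp: eventually_at_infinity intro: exI[of _ 1])
  with le have "\<forall>\<^sub>F x::'a in at_infinity. c / C * norm x powr (b - a) \<le> 1"
  proof eventually_elim
    case (elim x)
    have "c * norm x powr (-a) * norm x powr b \<le> C * norm x powr (-b) * norm x powr b"
      using elim by (intro mult_right_mono) auto
    then show ?case
      using elim \<open>C > 0\<close> by (simp add: powr_add[symmetric] field_simps)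
  qed
  then show False
    using bounded_not_eventually_ge_powr[of "\<lambda>_. 1" "c / C" "b - a"] assms \<open>\<not> b \<le> a\<close>
    by auto
qed

lemma one_plus_powr_ge:
  fixes t \<theta> :: real
  assumes "1 \<le> t"
  shows "2 powr (-max \<theta> 0) * t powr (-max \<theta> 0) \<le> (1 + t) powr (-\<theta>)"
proof (cases "0 \<le> \<theta>")
  case True
  have "(2 * t) powr (-\<theta>) \<le> (1 + t) powr (-\<theta>)"
    using assms True by (intro powr_mono2') auto
  then show ?thesis using assms True by (simp add: powr_mult)
next
  case False
  have "1 \<le> (1 + t) powr (-\<theta>)" using assms False by (intro ge_one_powr_ge_zero) auto
  then show ?thesis using False assms by simp
qed

lemma bounded_decay_imp_decay_everywhere:
  fixes f :: "'a::real_normed_vector \<Rightarrow> real" and \<theta> C :: real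
  assumes "bounded (range f)" "\<theta> \<ge> 0"
    and decay: "\<forall>\<^sub>F x in at_infinity. \<bar>f x\<bar> \<le> C * norm x powr (-\<theta>)"
  obtains C' where "0 \<le> C'" "\<And>x. x \<noteq> 0 \<Longrightarrow> \<bar>f x\<bar> \<le> C' * norm x powr (-\<theta>)"
proof -
  obtain M where M: "\<And>x. \<bar>f x\<bar> \<le> M"
    using assms(1) unfolding bounded_iff by auto
  obtain R where R: "R > 0" "\<And>x. R \<le> norm x \<Longrightarrow> \<bar>f x\<bar> \<le> C * norm x powr (-\<theta>)"
    using decay unfolding eventually_at_infinity_pos by blast
  have M0: "0 \<le> M" using M[of 0] by linarith
  show thesis
  proof (rule that)
    show "0 \<le> max C 0 + M * R powr \<theta>" using M0 by simp
  next
    fix x :: 'a assume "x \<noteq> 0"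
    show "\<bar>f x\<bar> \<le> (max C 0 + M * R powr \<theta>) * norm x powr (-\<theta>)"
    proof (cases "R \<le> norm x")
      case True
      have "\<bar>f x\<bar> \<le> C * norm x powr (-\<theta>)" using R(2)[OF True] .
      also have "\<dots> \<le> (max C 0 + M * R powr \<theta>) * norm x powr (-\<theta>)"
      proof (rule mult_right_mono)
        have "0 \<le> M * R powr \<theta>" using M0 by simp
        then show "C \<le> max C 0 + M * R powr \<theta>" by linarith
      qed simp
      finally show ?thesis .
    next
      case False
      have "norm x powr \<theta> \<le> R powr \<theta>"
        using False \<open>\<theta> \<ge> 0\<close> by (intro powr_mono2) auto
      then have "1 \<le> R powr \<theta> * norm x powr (-\<theta>)"
        using \<open>x \<noteq> 0\<close> by (simp add: powr_minus field_simps)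
      then have "M * 1 \<le> M * (R powr \<theta> * norm x powr (-\<theta>))"
        using M0 by (intro mult_left_mono)
      also have "\<dots> \<le> (max C 0 + M * R powr \<theta>) * norm x powr (-\<theta>)"
        using mult_right_mono[of 0 "max C 0" "norm x powr (-\<theta>)"] by (simp add: algebra_simps)
      finally show ?thesis using M[of x] by linarith
    qed
  qed
qed

lemma bounded_range_abs_powr:
  fixes f :: "'a \<Rightarrow> real"
  assumes "bounded (range f)" "0 \<le> r"
  shows "bounded (range (\<lambda>x. \<bar>f x\<bar> powr r))"
proof -
  obtain M where M: "\<And>x. \<bar>f x\<bar> \<le> M"
    using assms(1) unfolding bounded_iff by auto
  show ?thesis
    unfolding bounded_iff
  proof (intro exI ballI)
    fix y assume "y \<in> range (\<lambda>x. \<bar>f x\<bar> powr r)"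
    then obtain x where "y = \<bar>f x\<bar> powr r" by auto
    then show "norm y \<le> M powr r"
      using M[of x] \<open>0 \<le> r\<close> by (simp add: powr_mono2)
  qed
qed

section \<open>Dyadic estimates for integrals of powers\<close>

lemma powr_mult_power:
  fixes x y a :: real
  assumes "0 < x" "0 < y"
  shows "(x * y ^ k) powr a = x powr a * (y powr a) ^ k"
  using assms by (simp add: powr_mult powr_power powr_realpow[symmetric] powr_powr mult.commute)

lemma dyadic_scale_down:
  fixes s R :: real
  assumes "0 < s" "s < R"
  obtains k where "R * (1/2) ^ Suc k \<le> s" "s < R * (1/2) ^ k"
proof -
  obtain k0 where "(1/2::real) ^ k0 < s / R"
    using real_arch_pow_inv[of "s / R" "1/2"] assms by auto
  then have "\<exists>k. R * (1/2) ^ k \<le> s"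
    using assms by (intro exI[of _ k0]) (simp add: field_simps)
  then obtain k where "\<not> R * (1/2) ^ k \<le> s" "R * (1/2) ^ Suc k \<le> s"
    using exists_least_lemma[of "\<lambda>k. R * (1/2) ^ k \<le> s"] assms by auto
  then show thesis by (intro that) auto
qed

lemma dyadic_scale_up:
  fixes s R :: real
  assumes "0 < R" "R \<le> s"
  obtains k where "R * 2 ^ k \<le> s" "s < R * 2 ^ Suc k"
proof -
  obtain k0 where "s / R < 2 ^ k0"
    using real_arch_pow[of 2 "s / R"] by auto
  then have "\<exists>k. s < R * 2 ^ k"
    using assms by (intro exI[of _ k0]) (simp add: field_simps)
  then obtain k where "\<not> s < R * 2 ^ k" "s < R * 2 ^ Suc k"
    using exists_least_lemma[of "\<lambda>k. s < R * 2 ^ k"] assms by auto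
  then show thesis by (intro that) auto
qed

lemma nn_integral_le_geometric_cover:
  fixes f :: "'a \<Rightarrow> ennreal"
  assumes S: "\<And>k. S k \<in> sets M" and f: "f \<in> borel_measurable M"
    and cover: "X \<subseteq> (\<Union>k. S k)"
    and bound: "\<And>k. (\<integral>\<^sup>+y. indicator (S k) y * f y \<partial>M) \<le> ennreal (A * r ^ k)"
    and "0 \<le> A" "0 \<le> r" "r < 1"
  shows "(\<integral>\<^sup>+y. indicator X y * f y \<partial>M) \<le> ennreal (A / (1 - r))"
proof -
  have pointwise: "indicator X y * f y \<le> (\<Sum>k. indicator (S k) y * f y)" for y
  proof (cases "y \<in> X")
    case True
    then obtain k where "y \<in> S k" using cover by blast
    then have "indicator X y * f y = indicator (S k) y * f y" using True by simp
    also have "\<dots> \<le> (\<Sum>k. indicator (S k) y * f y)"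
      using sum_le_suminf[OF summableI, of "{k}" "\<lambda>k. indicator (S k) y * f y"]
      by (simp only: sum.insert finite.emptyI empty_iff sum.empty add_0_right
          zero_le simp_thms finite.insertI)
    finally show ?thesis .
  qed simp
  have "(\<integral>\<^sup>+y. indicator X y * f y \<partial>M) \<le> (\<integral>\<^sup>+y. (\<Sum>k. indicator (S k) y * f y) \<partial>M)"
    using pointwise by (rule nn_integral_mono)
  also have "\<dots> = (\<Sum>k. \<integral>\<^sup>+y. indicator (S k) y * f y \<partial>M)"
    using S f by (intro nn_integral_suminf) auto
  also have "\<dots> \<le> (\<Sum>k. ennreal (A * r ^ k))"
    by (intro suminf_le bound) auto
  also have "\<dots> = ennreal (\<Sum>k. A * r ^ k)"
    using assms by (intro suminf_ennreal2 summable_mult summable_geometric) auto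
  also have "(\<Sum>k. A * r ^ k) = A / (1 - r)"
    using assms by (simp add: suminf_mult suminf_geometric)
  finally show ?thesis .
qed

lemma nn_integral_annulus_powr_le:
  fixes c :: "'a::euclidean_space" and r b :: real
  assumes "r > 0"
  shows "(\<integral>\<^sup>+y. indicator (ball c r - ball c (r/2)) y * ennreal (norm (y - c) powr (-b)) \<partial>lborel)
    \<le> ennreal (2 powr \<bar>b\<bar> * unit_ball_vol DIM('a) * r powr (DIM('a) - b))"
proof -
  define B where "B = 2 powr \<bar>b\<bar> * r powr (-b)"
  have shell: "norm (y - c) powr (-b) \<le> B" if "y \<in> ball c r - ball c (r/2)" for y
  proof -
    have s: "r/2 \<le> norm (y - c)" "norm (y - c) \<le> r"
      using that by (auto simp: dist_norm norm_minus_commute)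
    show ?thesis
    proof (cases "b \<ge> 0")
      case True
      have "norm (y - c) powr (-b) \<le> (r/2) powr (-b)"
        using s assms True by (intro powr_mono2') auto
      also have "\<dots> = 2 powr b * r powr (-b)"
        using assms by (simp add: powr_divide powr_minus field_simps)
      finally show ?thesis using True by (simp add: B_def)
    next
      case False
      have "norm (y - c) powr (-b) \<le> r powr (-b)"
        using s assms False by (intro powr_mono2) auto
      also have "\<dots> \<le> 2 powr \<bar>b\<bar> * r powr (-b)"
        by (simp add: mult_le_cancel_right1 ge_one_powr_ge_zero)
      finally show ?thesis by (simp add: B_def)
    qed
  qed
  have "(\<integral>\<^sup>+y. indicator (ball c r - ball c (r/2)) y * ennreal (norm (y - c) powr (-b)) \<partial>lborel)
      \<le> (\<integral>\<^sup>+y. ennreal B * indicator (ball c r) y \<partial>lborel)"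
    using shell by (intro nn_integral_mono) (auto simp: indicator_def intro: ennreal_leI)
  also have "\<dots> = ennreal B * emeasure lborel (ball c r)"
    by (simp add: nn_integral_cmult_indicator)
  also have "\<dots> = ennreal (B * (unit_ball_vol DIM('a) * r powr DIM('a)))"
    using assms by (simp add: emeasure_ball ennreal_mult B_def powr_realpow)
  also have "B * (unit_ball_vol DIM('a) * r powr DIM('a))
      = 2 powr \<bar>b\<bar> * unit_ball_vol DIM('a) * r powr (DIM('a) - b)"
    by (simp add: B_def powr_diff powr_minus field_simps)
  finally show ?thesis .
qed

lemma nn_integral_ball_powr_le:
  fixes b :: real
  assumes "b < DIM('a::euclidean_space)"
  obtains K where "K \<ge> 0"
    "\<And>(c::'a) R. R > 0 \<Longrightarrow>
       (\<integral>\<^sup>+y. indicator (ball c R) y * ennreal (norm (y - c) powr (-b)) \<partial>lborel)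
         \<le> ennreal (K * R powr (DIM('a) - b))"
proof
  define \<rho> where "\<rho> = (2::real) powr (b - DIM('a))"
  have \<rho>: "0 \<le> \<rho>" "\<rho> < 1"
    using assms by (auto simp: \<rho>_def intro!: powr_less_one)
  have half_powr: "(1/2) powr (DIM('a) - b) = \<rho>"
    by (simp add: \<rho>_def powr_divide powr_diff)
  define K where "K = 2 powr \<bar>b\<bar> * unit_ball_vol DIM('a) / (1 - \<rho>)"
  show "K \<ge> 0" using \<rho> by (simp add: K_def)
  fix c :: 'a and R :: real
  assume R: "R > 0"
  define S where "S k = ball c (R * (1/2) ^ k) - ball c (R * (1/2) ^ k / 2)" for k
  \<comment> \<open>The centre is not covered by the annuli; it does not matter since \<open>0 powr _ = 0\<close>.\<close>
  have "indicator (ball c R) y * ennreal (norm (y - c) powr (-b))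
      = indicator (ball c R - {c}) y * ennreal (norm (y - c) powr (-b))" for y
    by (simp split: split_indicator)
  moreover have "ball c R - {c} \<subseteq> (\<Union>k. S k)"
  proof
    fix y assume y: "y \<in> ball c R - {c}"
    then obtain k where "R * (1/2) ^ Suc k \<le> dist c y" "dist c y < R * (1/2) ^ k"
      using dyadic_scale_down[of "dist c y" R] by auto
    then show "y \<in> (\<Union>k. S k)" by (auto simp: S_def)
  qed
  moreover have "(\<integral>\<^sup>+y. indicator (S k) y * ennreal (norm (y - c) powr (-b)) \<partial>lborel)
      \<le> ennreal (2 powr \<bar>b\<bar> * unit_ball_vol DIM('a) * R powr (DIM('a) - b) * \<rho> ^ k)" for k
    using nn_integral_annulus_powr_le[of "R * (1/2) ^ k" c b] R
    by (simp add: S_def powr_mult_power half_powr mult.assoc)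
  ultimately show "(\<integral>\<^sup>+y. indicator (ball c R) y * ennreal (norm (y - c) powr (-b)) \<partial>lborel)
      \<le> ennreal (K * R powr (DIM('a) - b))"
    using nn_integral_le_geometric_cover[of S lborel "\<lambda>y. ennreal (norm (y - c) powr (-b))"
        "ball c R - {c}" "2 powr \<bar>b\<bar> * unit_ball_vol DIM('a) * R powr (DIM('a) - b)" \<rho>] \<rho>
    by (simp add: S_def K_def field_simps)
qed

lemma nn_integral_outside_ball_powr_le:
  fixes b :: real
  assumes "b > DIM('a::euclidean_space)"
  obtains K where "K \<ge> 0"
    "\<And>(c::'a) R. R > 0 \<Longrightarrow>
       (\<integral>\<^sup>+y. indicator (- ball c R) y * ennreal (norm (y - c) powr (-b)) \<partial>lborel)
         \<le> ennreal (K * R powr (DIM('a) - b))"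
proof
  define \<rho> where "\<rho> = (2::real) powr (DIM('a) - b)"
  have \<rho>: "0 \<le> \<rho>" "\<rho> < 1"
    using assms by (auto simp: \<rho>_def intro!: powr_less_one)
  define K where "K = 2 powr \<bar>b\<bar> * unit_ball_vol DIM('a) * 2 powr (DIM('a) - b) / (1 - \<rho>)"
  show "K \<ge> 0" using \<rho> by (simp add: K_def)
  fix c :: 'a and R :: real
  assume R: "R > 0"
  define S where "S k = ball c (2 * R * 2 ^ k) - ball c (2 * R * 2 ^ k / 2)" for k
  have "- ball c R \<subseteq> (\<Union>k. S k)"
  proof
    fix y assume y: "y \<in> - ball c R"
    then obtain k where "R * 2 ^ k \<le> dist c y" "dist c y < R * 2 ^ Suc k"
      using dyadic_scale_up[of R "dist c y"] R by auto
    then show "y \<in> (\<Union>k. S k)" by (auto simp: S_def intro!: exI[of _ k])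
  qed
  moreover have "(\<integral>\<^sup>+y. indicator (S k) y * ennreal (norm (y - c) powr (-b)) \<partial>lborel)
      \<le> ennreal (2 powr \<bar>b\<bar> * unit_ball_vol DIM('a) * (2 * R) powr (DIM('a) - b) * \<rho> ^ k)" for k
  proof -
    have "(\<integral>\<^sup>+y. indicator (S k) y * ennreal (norm (y - c) powr (-b)) \<partial>lborel)
        \<le> ennreal (2 powr \<bar>b\<bar> * unit_ball_vol DIM('a) * (2 * R * 2 ^ k) powr (DIM('a) - b))"
      unfolding S_def by (rule nn_integral_annulus_powr_le) (use R in simp)
    also have "(2 * R * 2 ^ k) powr (DIM('a) - b) = (2 * R) powr (DIM('a) - b) * \<rho> ^ k"
      using powr_mult_power[of "2 * R" 2 k] R by (simp add: \<rho>_def)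
    finally show ?thesis by (simp add: mult.assoc)
  qed
  ultimately show "(\<integral>\<^sup>+y. indicator (- ball c R) y * ennreal (norm (y - c) powr (-b)) \<partial>lborel)
      \<le> ennreal (K * R powr (DIM('a) - b))"
    using nn_integral_le_geometric_cover[of S lborel "\<lambda>y. ennreal (norm (y - c) powr (-b))"
        "- ball c R" "2 powr \<bar>b\<bar> * unit_ball_vol DIM('a) * (2 * R) powr (DIM('a) - b)" \<rho>] \<rho> R
    by (simp add: S_def K_def powr_mult field_simps)
qed

lemma pred_mem_ball [measurable]: "Measurable.pred borel (\<lambda>x::'a::metric_space. x \<in> ball c r)"
  by (rule pred_sets2[OF borel_open[OF open_ball]]) simp

lemma nn_integral_finite_if_bounded_decay:
  fixes f :: "'a::euclidean_space \<Rightarrow> real" and \<theta> C :: real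
  assumes "bounded (range f)" "\<theta> > DIM('a)"
    and decay: "\<forall>\<^sub>F x in at_infinity. \<bar>f x\<bar> \<le> C * norm x powr (-\<theta>)"
  shows "(\<integral>\<^sup>+x. ennreal \<bar>f x\<bar> \<partial>lborel) < \<infinity>"
proof -
  obtain M where M: "\<And>x. \<bar>f x\<bar> \<le> M"
    using assms(1) unfolding bounded_iff by auto
  obtain R where R: "R > 0" "\<And>x. R \<le> norm x \<Longrightarrow> \<bar>f x\<bar> \<le> C * norm x powr (-\<theta>)"
    using decay unfolding eventually_at_infinity_pos by blast
  obtain K where K: "\<And>R. R > 0 \<Longrightarrow>
      (\<integral>\<^sup>+y. indicator (- ball (0::'a) R) y * ennreal (norm (y - 0) powr (-\<theta>)) \<partial>lborel)
        \<le> ennreal (K * R powr (DIM('a) - \<theta>))"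
    using nn_integral_outside_ball_powr_le[OF assms(2)] by metis
  have "ennreal \<bar>f x\<bar> \<le> ennreal M * indicator (ball 0 R) x
      + ennreal C * (indicator (- ball 0 R) x * ennreal (norm (x - 0) powr (-\<theta>)))" for x :: 'a
  proof (cases "x \<in> ball 0 R")
    case True
    then show ?thesis using M[of x] by (simp add: ennreal_leI)
  next
    case False
    then have "\<bar>f x\<bar> \<le> C * norm x powr (-\<theta>)" using R by auto
    then have "ennreal \<bar>f x\<bar> \<le> ennreal C * ennreal (norm x powr (-\<theta>))"
      by (metis ennreal_leI ennreal_mult'' powr_ge_zero)
    then show ?thesis using False by simp
  qed
  then have "(\<integral>\<^sup>+x. ennreal \<bar>f x\<bar> \<partial>lborel)
      \<le> (\<integral>\<^sup>+x. ennreal M * indicator (ball (0::'a) R) x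
          + ennreal C * (indicator (- ball 0 R) x * ennreal (norm (x - 0) powr (-\<theta>))) \<partial>lborel)"
    by (rule nn_integral_mono)
  also have "\<dots> = ennreal M * emeasure lborel (ball (0::'a) R)
      + ennreal C * (\<integral>\<^sup>+x. indicator (- ball (0::'a) R) x * ennreal (norm (x - 0) powr (-\<theta>)) \<partial>lborel)"
    by (subst nn_integral_add)
      (simp_all add: nn_integral_cmult nn_integral_cmult_indicator, measurable)
  also have "\<dots> < \<infinity>"
    using K[OF R(1)] emeasure_lborel_ball_finite[of "0::'a" R]
    by (simp add: ennreal_mult_less_top le_less_trans)
  finally show ?thesis .
qed

lemma nn_integral_abs_powr_finite_if_bounded_decay:
  fixes f :: "'a::euclidean_space \<Rightarrow> real" and r \<theta> C :: real
  assumes "bounded (range f)" "r > 0" "\<theta> * r > DIM('a)"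
    and decay: "\<forall>\<^sub>F x in at_infinity. \<bar>f x\<bar> \<le> C * norm x powr (-\<theta>)"
  shows "(\<integral>\<^sup>+x. ennreal (\<bar>f x\<bar> powr r) \<partial>lborel) < \<infinity>"
proof -
  have "bounded (range (\<lambda>x. \<bar>f x\<bar> powr r))"
    using bounded_range_abs_powr[OF assms(1)] \<open>r > 0\<close> by simp
  moreover have "\<forall>\<^sub>F x in at_infinity. \<bar>\<bar>f x\<bar> powr r\<bar> \<le> C powr r * norm x powr (-(\<theta> * r))"
  proof -
    have "\<forall>\<^sub>F x::'a in at_infinity. norm x > 0"
      by (auto simp: eventually_at_infinity intro: exI[of _ 1])
    with decay show ?thesis
    proof eventually_elim
      case (elim x)
      then have "0 \<le> C * norm x powr (-\<theta>)" by (meson abs_ge_zero order_trans)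
      then have "0 \<le> C" using elim by (simp add: zero_le_mult_iff)
      have "\<bar>f x\<bar> powr r \<le> (C * norm x powr (-\<theta>)) powr r"
        using elim \<open>r > 0\<close> by (intro powr_mono2) auto
      also have "\<dots> = C powr r * norm x powr (-(\<theta> * r))"
        using \<open>0 \<le> C\<close> by (simp add: powr_mult powr_powr)
      finally show ?case by simp
    qed
  qed
  ultimately have "(\<integral>\<^sup>+x. ennreal \<bar>\<bar>f x\<bar> powr r\<bar> \<partial>lborel) < \<infinity>"
    by (rule nn_integral_finite_if_bounded_decay[OF _ assms(3)])
  then show ?thesis by simp
qed

section \<open>The weighted Riesz potential\<close>

definition weighted_riesz_potential ::
    "real \<Rightarrow> real \<Rightarrow> ('a::euclidean_space \<Rightarrow> real) \<Rightarrow> 'a \<Rightarrow> ennreal" where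
  "weighted_riesz_potential \<alpha> \<sigma> g x =
     (\<integral>\<^sup>+y. ennreal (g y / (norm (x - y) powr (real DIM('a) - \<alpha>) * norm y powr \<sigma>)) \<partial>lborel)"

lemma weighted_riesz_potential_lower_bound:
  fixes g :: "'a::euclidean_space \<Rightarrow> real" and \<alpha> \<sigma> b c :: real
  assumes "\<alpha> < DIM('a)" "0 \<le> \<sigma>" "0 < c" "0 \<le> b"
    and lower: "\<forall>\<^sub>F y in at_infinity. c * norm y powr (-b) \<le> g y"
  shows "\<exists>c'>0. \<forall>\<^sub>F x in at_infinity.
           ennreal (c' * norm x powr (-(b + \<sigma> - \<alpha>))) \<le> weighted_riesz_potential \<alpha> \<sigma> g x"
proof -
  obtain R where R: "R > 0" "\<And>y. R \<le> norm y \<Longrightarrow> c * norm y powr (-b) \<le> g y"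
    using lower unfolding eventually_at_infinity_pos by blast
  define \<beta> where "\<beta> = DIM('a) - \<alpha>"
  have \<beta>: "\<beta> > 0" using assms(1) by (simp add: \<beta>_def)
  define \<omega> where "\<omega> = unit_ball_vol DIM('a)"
  have \<omega>: "\<omega> > 0" by (simp add: \<omega>_def)
  define c' where "c' = c * \<omega> * (3/2) powr (-(b + \<sigma>)) * (1/2) powr \<alpha>"
  have "\<forall>\<^sub>F x in at_infinity.
      ennreal (c' * norm x powr (-(b + \<sigma> - \<alpha>))) \<le> weighted_riesz_potential \<alpha> \<sigma> g x"
    unfolding eventually_at_infinity
  proof (intro exI allI impI)
    fix x :: 'a assume x: "2 * R \<le> norm x"
    define t where "t = norm x"
    define \<rho> where "\<rho> = t / 2"
    define T where "T = 3 * t / 2"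
    have t: "t > 0" "\<rho> > 0" "T > 0" using x R by (auto simp: t_def \<rho>_def T_def)
    define m where "m = c * T powr (-b) / (\<rho> powr \<beta> * T powr \<sigma>)"
    have m: "0 \<le> m" using assms by (simp add: m_def)
    have near: "m \<le> g y / (norm (x - y) powr \<beta> * norm y powr \<sigma>)"
      if y: "y \<in> ball x \<rho>" "y \<noteq> x" for y
    proof -
      have d: "0 < norm (x - y)" "norm (x - y) < \<rho>" using y by (auto simp: dist_norm)
      have "t / 2 \<le> norm y" "norm y \<le> T"
        using d norm_triangle_ineq2[of x y] norm_triangle_ineq3[of y x]
        by (auto simp: t_def \<rho>_def T_def norm_minus_commute)
      then have ny: "R \<le> norm y" "0 < norm y" "norm y \<le> T" using x R by (auto simp: t_def)
      have "c * T powr (-b) \<le> c * norm y powr (-b)"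
        using ny assms by (intro mult_left_mono powr_mono2') auto
      also have "\<dots> \<le> g y" using R(2)[OF ny(1)] .
      finally have num: "c * T powr (-b) \<le> g y" .
      have "0 \<le> c * T powr (-b)" using assms by simp
      with num have "0 \<le> g y" by linarith
      have den: "norm (x - y) powr \<beta> * norm y powr \<sigma> \<le> \<rho> powr \<beta> * T powr \<sigma>"
        using d ny \<beta> assms by (intro mult_mono powr_mono2) auto
      show ?thesis unfolding m_def
        using num den d ny \<open>0 \<le> g y\<close> by (intro frac_le) auto
    qed
    have "ennreal m * emeasure lborel (ball x \<rho>) = (\<integral>\<^sup>+y. ennreal m * indicator (ball x \<rho>) y \<partial>lborel)"
      by (rule nn_integral_cmult_indicator[symmetric]) simp
    also have "\<dots> \<le> weighted_riesz_potential \<alpha> \<sigma> g x"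
      unfolding weighted_riesz_potential_def
    proof (rule nn_integral_mono_AE)
      show "AE y in lborel. ennreal m * indicator (ball x \<rho>) y
          \<le> ennreal (g y / (norm (x - y) powr (DIM('a) - \<alpha>) * norm y powr \<sigma>))"
        using AE_lborel_singleton[of x]
        by eventually_elim (auto simp: indicator_def intro!: ennreal_leI near[unfolded \<beta>_def mem_ball])
    qed
    finally have "ennreal (m * (\<omega> * \<rho> ^ DIM('a))) \<le> weighted_riesz_potential \<alpha> \<sigma> g x"
      using m t by (simp add: emeasure_ball ennreal_mult \<omega>_def)
    moreover have "m * (\<omega> * \<rho> ^ DIM('a)) = c' * t powr (-(b + \<sigma> - \<alpha>))"
    proof -
      have "\<rho> ^ DIM('a) = \<rho> powr \<beta> * \<rho> powr \<alpha>"
        using t by (simp add: \<beta>_def powr_realpow[symmetric] powr_add[symmetric])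
      moreover have "T powr (-b) / T powr \<sigma> = (3/2) powr (-(b + \<sigma>)) * t powr (-(b + \<sigma>))"
      proof -
        have "T powr (-b) / T powr \<sigma> = T powr (-(b + \<sigma>))"
          using powr_diff[of T "-b" \<sigma>] by simp
        also have "\<dots> = (3/2) powr (-(b + \<sigma>)) * t powr (-(b + \<sigma>))"
          using t powr_mult[of "3/2" t "-(b + \<sigma>)"] by (simp add: T_def mult.commute)
        finally show ?thesis .
      qed
      moreover have "\<rho> powr \<alpha> = (1/2) powr \<alpha> * t powr \<alpha>"
        using t by (simp add: \<rho>_def powr_mult[symmetric])
      moreover have "t powr (-(b + \<sigma> - \<alpha>)) = t powr (-(b + \<sigma>)) * t powr \<alpha>"
        by (simp add: powr_add[symmetric] algebra_simps)
      ultimately show ?thesis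
        using t by (simp add: m_def c'_def field_simps)
    qed
    ultimately show "ennreal (c' * norm x powr (-(b + \<sigma> - \<alpha>))) \<le> weighted_riesz_potential \<alpha> \<sigma> g x"
      by (simp add: t_def)
  qed
  moreover have "c' > 0" using assms \<omega> by (simp add: c'_def)
  ultimately show ?thesis by blast
qed

lemma weighted_riesz_potential_lower_bound_positive:
  fixes g :: "'a::euclidean_space \<Rightarrow> real" and \<alpha> \<sigma> :: real
  assumes "\<alpha> < DIM('a)" "0 \<le> \<sigma>" and g: "g \<in> borel_measurable lborel" "\<And>y. 0 < g y"
  shows "\<exists>c>0. \<forall>\<^sub>F x in at_infinity.
           ennreal (c * norm x powr (-(DIM('a) - \<alpha>))) \<le> weighted_riesz_potential \<alpha> \<sigma> g x"
proof -
  define \<beta> where "\<beta> = DIM('a) - \<alpha>"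
  have \<beta>: "\<beta> > 0" using assms(1) by (simp add: \<beta>_def)
  define I where "I = (\<integral>\<^sup>+y. indicator (ball 0 1) y * ennreal (g y) \<partial>lborel)"
  have "I \<noteq> 0"
  proof
    assume "I = 0"
    then have "AE y in lborel. indicator (ball (0::'a) 1) y * ennreal (g y) = 0"
      unfolding I_def using g(1) by (subst (asm) nn_integral_0_iff_AE) auto
    then have "AE y in lborel. y \<notin> ball (0::'a) 1"
    proof eventually_elim
      case (elim y)
      then show ?case using g(2)[of y] by (auto simp: indicator_def split: if_splits)
    qed
    then have "emeasure lborel (ball (0::'a) 1) = 0"
      by (subst (asm) AE_iff_measurable[of "ball 0 1"]) auto
    then show False
      using unit_ball_vol_pos[of "DIM('a)"] by (simp add: emeasure_ball)
  qed
  obtain c where c: "0 < c" "ennreal c \<le> I"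
  proof (cases I rule: ennreal_cases)
    case (real r)
    then show thesis using that[of r] \<open>I \<noteq> 0\<close> by auto
  next
    case top
    then show thesis using that[of 1] by simp
  qed
  have "\<forall>\<^sub>F x in at_infinity.
      ennreal (c * 2 powr (-\<beta>) * norm x powr (-\<beta>)) \<le> weighted_riesz_potential \<alpha> \<sigma> g x"
    unfolding eventually_at_infinity
  proof (intro exI allI impI)
    fix x :: 'a assume x: "1 \<le> norm x"
    define k where "k = (2 * norm x) powr (-\<beta>)"
    have near: "k * g y \<le> g y / (norm (x - y) powr \<beta> * norm y powr \<sigma>)"
      if y: "y \<in> ball 0 1" "y \<noteq> 0" "y \<noteq> x" for y
    proof -
      have "norm (x - y) \<le> 2 * norm x"
        using norm_triangle_ineq4[of x y] y x by simp
      then have "norm (x - y) powr \<beta> * norm y powr \<sigma> \<le> (2 * norm x) powr \<beta> * 1"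
        using y \<beta> assms(2) by (intro mult_mono powr_mono2 powr_le1) auto
      moreover have "0 < norm (x - y) powr \<beta> * norm y powr \<sigma>" using y by simp
      ultimately have "g y / (2 * norm x) powr \<beta> \<le> g y / (norm (x - y) powr \<beta> * norm y powr \<sigma>)"
        using g(2)[of y] x by (intro divide_left_mono mult_pos_pos) auto
      then show ?thesis by (simp add: k_def powr_minus divide_inverse mult.commute)
    qed
    have "ennreal k * I = (\<integral>\<^sup>+y. ennreal k * (indicator (ball 0 1) y * ennreal (g y)) \<partial>lborel)"
      unfolding I_def using g(1) by (subst nn_integral_cmult) auto
    also have "\<dots> \<le> weighted_riesz_potential \<alpha> \<sigma> g x"
      unfolding weighted_riesz_potential_def
    proof (rule nn_integral_mono_AE)
      show "AE y in lborel. ennreal k * (indicator (ball 0 1) y * ennreal (g y))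
          \<le> ennreal (g y / (norm (x - y) powr (real DIM('a) - \<alpha>) * norm y powr \<sigma>))"
        using AE_lborel_singleton[of 0] AE_lborel_singleton[of x]
      proof eventually_elim
        case (elim y)
        show ?case
        proof (cases "y \<in> ball 0 1")
          case True
          have "ennreal k * (indicator (ball 0 1) y * ennreal (g y)) = ennreal (k * g y)"
            using True g(2)[of y] by (simp add: k_def ennreal_mult)
          also have "\<dots> \<le> ennreal (g y / (norm (x - y) powr (real DIM('a) - \<alpha>) * norm y powr \<sigma>))"
            using near[OF True] elim by (simp add: \<beta>_def ennreal_leI)
          finally show ?thesis .
        qed simp
      qed
    qed
    finally have "ennreal k * ennreal c \<le> weighted_riesz_potential \<alpha> \<sigma> g x"
      using c by (meson mult_left_mono order_trans zero_le)
    then show "ennreal (c * 2 powr (-\<beta>) * norm x powr (-\<beta>)) \<le> weighted_riesz_potential \<alpha> \<sigma> g x"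
      using c x by (simp add: k_def ennreal_mult[symmetric] powr_mult mult_ac)
  qed
  moreover have "c * 2 powr (-\<beta>) > 0" using c by simp
  ultimately show ?thesis unfolding \<beta>_def by (metis mult.assoc)
qed

lemma riesz_kernel_split_le:
  fixes x y :: "'a::real_normed_vector" and h s \<beta> :: real
  assumes "norm x = 2 * h" "0 < h" "y \<noteq> 0" "y \<noteq> x" "0 \<le> s" "0 < \<beta>"
  shows "norm y powr (-s) * norm (x - y) powr (-\<beta>)
    \<le> h powr (-\<beta>) * (indicator (ball 0 h) y * norm y powr (-s))
      + h powr (-s) * (indicator (ball x h) y * norm (y - x) powr (-\<beta>))
      + 3 powr \<beta> * (indicator (- ball 0 h) y * norm y powr (-(s + \<beta>)))"
    (is "?k \<le> ?A + ?B + ?C")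
proof -
  have ny: "0 < norm y" and d: "0 < norm (x - y)" using assms by auto
  have nonneg: "0 \<le> ?A" "0 \<le> ?B" "0 \<le> ?C" by (simp_all split: split_indicator)
  consider "norm y < h" | "h \<le> norm y" "norm (x - y) < h" | "h \<le> norm y" "h \<le> norm (x - y)"
    by linarith
  then show ?thesis
  proof cases
    case 1
    have "h \<le> norm (x - y)" using 1 norm_triangle_ineq2[of x y] assms(1) by simp
    then have "?k \<le> norm y powr (-s) * h powr (-\<beta>)"
      using d assms by (intro mult_left_mono powr_mono2') auto
    also have "\<dots> = ?A" using 1 by simp
    finally show ?thesis using nonneg by linarith
  next
    case 2
    have "?k \<le> h powr (-s) * norm (x - y) powr (-\<beta>)"
      using 2 ny assms by (intro mult_right_mono powr_mono2') auto
    also have "\<dots> = ?B" using 2 by (simp add: dist_norm norm_minus_commute)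
    finally show ?thesis using nonneg by linarith
  next
    case 3
    have "norm y \<le> 3 * norm (x - y)"
      using 3 norm_triangle_ineq4[of x "x - y"] assms(1) by simp
    then have "norm (x - y) powr (-\<beta>) \<le> (norm y / 3) powr (-\<beta>)"
      using ny assms by (intro powr_mono2') auto
    also have "\<dots> = 3 powr \<beta> * norm y powr (-\<beta>)"
      using ny by (simp add: powr_divide powr_minus field_simps)
    finally have "?k \<le> norm y powr (-s) * (3 powr \<beta> * norm y powr (-\<beta>))"
      by (intro mult_left_mono) auto
    also have "\<dots> = ?C" using 3 by (simp add: powr_add[symmetric] mult_ac add_ac)
    finally show ?thesis using nonneg by linarith
  qed
qed

lemma weighted_riesz_potential_upper_bound:
  fixes g :: "'a::euclidean_space \<Rightarrow> real" and \<alpha> \<sigma> a C :: real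
  assumes "0 < \<alpha>" "\<alpha> < a + \<sigma>" "a + \<sigma> < DIM('a)" "0 \<le> \<sigma>" "0 \<le> C"
    and upper: "\<And>y. y \<noteq> 0 \<Longrightarrow> g y \<le> C * norm y powr (-a)"
  obtains K where "\<And>x. x \<noteq> 0 \<Longrightarrow>
    weighted_riesz_potential \<alpha> \<sigma> g x \<le> ennreal (K * norm x powr (-(a + \<sigma> - \<alpha>)))"
proof -
  define s where "s = a + \<sigma>"
  define \<beta> where "\<beta> = DIM('a) - \<alpha>"
  have s: "0 \<le> s" "s < DIM('a)" and \<beta>: "0 < \<beta>" "\<beta> < DIM('a)" and "DIM('a) < s + \<beta>"
    using assms by (auto simp: s_def \<beta>_def)
  obtain K1 where K1: "K1 \<ge> 0" "\<And>(c::'a) R. R > 0 \<Longrightarrow>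
      (\<integral>\<^sup>+y. indicator (ball c R) y * ennreal (norm (y - c) powr (-s)) \<partial>lborel)
        \<le> ennreal (K1 * R powr (DIM('a) - s))"
    using nn_integral_ball_powr_le[OF s(2)] by blast
  obtain K2 where K2: "K2 \<ge> 0" "\<And>(c::'a) R. R > 0 \<Longrightarrow>
      (\<integral>\<^sup>+y. indicator (ball c R) y * ennreal (norm (y - c) powr (-\<beta>)) \<partial>lborel)
        \<le> ennreal (K2 * R powr (DIM('a) - \<beta>))"
    using nn_integral_ball_powr_le[OF \<beta>(2)] by blast
  obtain K3 where K3: "K3 \<ge> 0" "\<And>(c::'a) R. R > 0 \<Longrightarrow>
      (\<integral>\<^sup>+y. indicator (- ball c R) y * ennreal (norm (y - c) powr (-(s + \<beta>))) \<partial>lborel)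
        \<le> ennreal (K3 * R powr (DIM('a) - (s + \<beta>)))"
    using nn_integral_outside_ball_powr_le[OF \<open>DIM('a) < s + \<beta>\<close>] by blast
  show thesis
  proof (rule that)
    fix x :: 'a assume "x \<noteq> 0"
    define h where "h = norm x / 2"
    have h: "0 < h" "norm x = 2 * h" using \<open>x \<noteq> 0\<close> by (auto simp: h_def)
    define f1 where "f1 y = indicator (ball 0 h) y * norm y powr (-s)" for y :: 'a
    define f2 where "f2 y = indicator (ball x h) y * norm (y - x) powr (-\<beta>)" for y :: 'a
    define f3 where "f3 y = indicator (- ball 0 h) y * norm y powr (-(s + \<beta>))" for y :: 'a
    define c1 c2 c3 where "c1 = C * h powr (-\<beta>)" "c2 = C * h powr (-s)" "c3 = C * 3 powr \<beta>"
    have c: "0 \<le> c1" "0 \<le> c2" "0 \<le> c3" using \<open>0 \<le> C\<close> by (simp_all add: c1_c2_c3_def)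
    have f: "0 \<le> f1 y" "0 \<le> f2 y" "0 \<le> f3 y" for y by (simp_all add: f1_def f2_def f3_def)
    have pointwise: "g y / (norm (x - y) powr \<beta> * norm y powr \<sigma>) \<le> c1 * f1 y + c2 * f2 y + c3 * f3 y"
      for y
    proof (cases "y = 0 \<or> y = x")
      case True
      \<comment> \<open>Then the denominator is \<open>0\<close>, and so is the integrand.\<close>
      then show ?thesis using c f by (auto intro!: add_nonneg_nonneg)
    next
      case False
      have "g y / (norm (x - y) powr \<beta> * norm y powr \<sigma>)
          \<le> C * norm y powr (-a) / (norm (x - y) powr \<beta> * norm y powr \<sigma>)"
        using False upper[of y] by (intro divide_right_mono) auto
      also have "\<dots> = C * (norm y powr (-s) * norm (x - y) powr (-\<beta>))"
      proof -
        have "norm y powr (-s) = norm y powr (-a) / norm y powr \<sigma>"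
          using powr_diff[of "norm y" "-a" \<sigma>] by (simp add: s_def)
        then show ?thesis by (simp add: powr_minus_divide)
      qed
      also have "\<dots> \<le> C * (h powr (-\<beta>) * f1 y + h powr (-s) * f2 y + 3 powr \<beta> * f3 y)"
        unfolding f1_def f2_def f3_def
        using False h s \<beta> \<open>0 \<le> C\<close> by (intro mult_left_mono riesz_kernel_split_le) auto
      finally show ?thesis by (simp add: c1_c2_c3_def algebra_simps)
    qed
    have integral: "(\<integral>\<^sup>+y. ennreal (f1 y) \<partial>lborel) \<le> ennreal (K1 * h powr (DIM('a) - s))"
        "(\<integral>\<^sup>+y. ennreal (f2 y) \<partial>lborel) \<le> ennreal (K2 * h powr (DIM('a) - \<beta>))"
        "(\<integral>\<^sup>+y. ennreal (f3 y) \<partial>lborel) \<le> ennreal (K3 * h powr (DIM('a) - (s + \<beta>)))"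
      using K1(2)[OF h(1), of 0] K2(2)[OF h(1), of x] K3(2)[OF h(1), of 0]
      by (simp_all add: f1_def f2_def f3_def ennreal_mult' ennreal_indicator)
    have m: "(\<lambda>y. ennreal (f1 y)) \<in> borel_measurable lborel"
        "(\<lambda>y. ennreal (f2 y)) \<in> borel_measurable lborel"
        "(\<lambda>y. ennreal (f3 y)) \<in> borel_measurable lborel"
      unfolding f1_def f2_def f3_def by measurable
    have "weighted_riesz_potential \<alpha> \<sigma> g x
        \<le> (\<integral>\<^sup>+y. ennreal (c1 * f1 y + c2 * f2 y + c3 * f3 y) \<partial>lborel)"
      unfolding weighted_riesz_potential_def \<beta>_def[symmetric]
      using pointwise by (intro nn_integral_mono ennreal_leI)
    also have "\<dots> = (\<integral>\<^sup>+y. ennreal c1 * ennreal (f1 y) + ennreal c2 * ennreal (f2 y)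
        + ennreal c3 * ennreal (f3 y) \<partial>lborel)"
    proof (intro nn_integral_cong)
      fix y
      have "0 \<le> c1 * f1 y" "0 \<le> c2 * f2 y" "0 \<le> c3 * f3 y" using c f by simp_all
      then show "ennreal (c1 * f1 y + c2 * f2 y + c3 * f3 y)
          = ennreal c1 * ennreal (f1 y) + ennreal c2 * ennreal (f2 y) + ennreal c3 * ennreal (f3 y)"
        using c f by (simp add: ennreal_mult)
    qed
    also have "\<dots> = ennreal c1 * (\<integral>\<^sup>+y. ennreal (f1 y) \<partial>lborel)
        + ennreal c2 * (\<integral>\<^sup>+y. ennreal (f2 y) \<partial>lborel) + ennreal c3 * (\<integral>\<^sup>+y. ennreal (f3 y) \<partial>lborel)"
      using m by (simp add: nn_integral_add nn_integral_cmult)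
    also have "\<dots> \<le> ennreal c1 * ennreal (K1 * h powr (DIM('a) - s))
        + ennreal c2 * ennreal (K2 * h powr (DIM('a) - \<beta>))
        + ennreal c3 * ennreal (K3 * h powr (DIM('a) - (s + \<beta>)))"
      by (intro add_mono mult_left_mono integral) auto
    also have "\<dots> = ennreal (c1 * (K1 * h powr (DIM('a) - s)) + c2 * (K2 * h powr (DIM('a) - \<beta>))
        + c3 * (K3 * h powr (DIM('a) - (s + \<beta>))))"
      using c K1(1) K2(1) K3(1) by (simp add: ennreal_mult ennreal_plus)
    also have "c1 * (K1 * h powr (DIM('a) - s)) + c2 * (K2 * h powr (DIM('a) - \<beta>))
        + c3 * (K3 * h powr (DIM('a) - (s + \<beta>))) = C * (K1 + K2 + 3 powr \<beta> * K3) * h powr (\<alpha> - s)"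
    proof -
      have "h powr (-\<beta>) * h powr (DIM('a) - s) = h powr (\<alpha> - s)"
        "h powr (-s) * h powr (DIM('a) - \<beta>) = h powr (\<alpha> - s)"
        "h powr (DIM('a) - (s + \<beta>)) = h powr (\<alpha> - s)"
        by (simp_all add: \<beta>_def powr_add[symmetric])
      then show ?thesis by (simp add: c1_c2_c3_def algebra_simps)
    qed
    also have "h powr (\<alpha> - s) = 2 powr (s - \<alpha>) * norm x powr (-(a + \<sigma> - \<alpha>))"
    proof -
      have "h powr (\<alpha> - s) = norm x powr (\<alpha> - s) / 2 powr (\<alpha> - s)"
        unfolding h_def by (simp add: powr_divide)
      moreover have "2 powr (\<alpha> - s) = inverse (2 powr (s - \<alpha>))"
        using powr_minus[of 2 "s - \<alpha>"] by simp
      ultimately show ?thesis by (simp add: s_def divide_inverse mult.commute)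
    qed
    finally show "weighted_riesz_potential \<alpha> \<sigma> g x
        \<le> ennreal (C * (K1 + K2 + 3 powr \<beta> * K3) * 2 powr (s - \<alpha>) * norm x powr (-(a + \<sigma> - \<alpha>)))"
      by (simp add: mult.assoc)
  qed
qed


section \<open>Positive bounded solutions of the system\<close>

lemma q0_swap: "q0 \<alpha> \<sigma>2 \<sigma>1 q p = p0 \<alpha> \<sigma>1 \<sigma>2 p q"
  by (simp add: q0_def p0_def mult.commute)

lemma p0_swap: "p0 \<alpha> \<sigma>2 \<sigma>1 q p = q0 \<alpha> \<sigma>1 \<sigma>2 p q"
  by (simp add: q0_def p0_def mult.commute)

lemma p0_eq:
  assumes "1 < p * q"
  shows "p * q0 \<alpha> \<sigma>1 \<sigma>2 p q + \<sigma>2 - \<alpha> = p0 \<alpha> \<sigma>1 \<sigma>2 p q"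
  using assms by (simp add: q0_def p0_def field_simps)

lemma q0_eq:
  assumes "1 < p * q"
  shows "q * p0 \<alpha> \<sigma>1 \<sigma>2 p q + \<sigma>1 - \<alpha> = q0 \<alpha> \<sigma>1 \<sigma>2 p q"
  using p0_eq[of q p \<alpha> \<sigma>2 \<sigma>1] assms
  by (simp add: q0_swap[of \<alpha> \<sigma>2 \<sigma>1 q p] p0_swap[of \<alpha> \<sigma>2 \<sigma>1 q p] mult.commute)

lemma is_solution_swap: "is_solution \<alpha> \<sigma>2 \<sigma>1 q p v u \<longleftrightarrow> is_solution \<alpha> \<sigma>1 \<sigma>2 p q u v"
  by (auto simp: is_solution_def)

lemma integrable_solution_swap:
  "integrable_solution \<alpha> \<sigma>2 \<sigma>1 q p v u \<longleftrightarrow> integrable_solution \<alpha> \<sigma>1 \<sigma>2 p q u v"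
  by (simp add: integrable_solution_def q0_swap[of \<alpha> \<sigma>2 \<sigma>1 q p] p0_swap[of \<alpha> \<sigma>2 \<sigma>1 q p]
      conj_commute)

locale weighted_hls_system =
  fixes \<alpha> \<sigma>1 \<sigma>2 p q :: real and u v :: "real^'n \<Rightarrow> real"
  assumes p_pos: "0 < p" and q_pos: "0 < q" and pq_gt_1: "1 < p * q"
    and \<alpha>_pos: "0 < \<alpha>" and \<alpha>_less_dim: "\<alpha> < CARD('n)"
    and \<sigma>1: "0 \<le> \<sigma>1" "\<sigma>1 < \<alpha>" and \<sigma>2: "0 \<le> \<sigma>2" "\<sigma>2 < \<alpha>"
    and bounded_u: "bounded (range u)" and bounded_v: "bounded (range v)"
    and u_pos: "\<And>x. 0 < u x" and v_pos: "\<And>x. 0 < v x"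
    and solution: "is_solution \<alpha> \<sigma>1 \<sigma>2 p q u v"

context weighted_hls_system
begin

text \<open>
  The system is invariant under exchanging \<open>(u, p, \<sigma>1)\<close> with \<open>(v, q, \<sigma>2)\<close>. Facts about
  \<open>u\<close> are transferred to \<open>v\<close> by interpreting the locale at the swapped parameters.
\<close>

lemma swapped: "weighted_hls_system \<alpha> \<sigma>2 \<sigma>1 q p v u"
  using p_pos q_pos pq_gt_1 \<alpha>_pos \<alpha>_less_dim \<sigma>1 \<sigma>2 bounded_u bounded_v u_pos v_pos solution
  by unfold_locales (simp_all add: is_solution_swap[of \<alpha> \<sigma>1 \<sigma>2 p q u v] mult.commute)

lemma q0_pos: "0 < q0 \<alpha> \<sigma>1 \<sigma>2 p q"
proof -
  have "0 < (\<alpha> - \<sigma>1) + q * (\<alpha> - \<sigma>2)" using q_pos \<sigma>1 \<sigma>2 by (intro add_pos_pos) auto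
  then show ?thesis using pq_gt_1 by (simp add: q0_def algebra_simps)
qed

lemma u_measurable: "u \<in> borel_measurable lborel"
  using solution by (simp add: is_solution_def)

lemma u_eq_potential: "ennreal (u x) = weighted_riesz_potential \<alpha> \<sigma>1 (\<lambda>y. v y powr q) x"
  using solution by (simp add: is_solution_def weighted_riesz_potential_def)

lemma lower_bound_exponent_nonneg:
  assumes "0 < c" "\<forall>\<^sub>F x in at_infinity. c * norm x powr (-e) \<le> u x"
  shows "0 \<le> e"
  using bounded_not_eventually_ge_powr[OF bounded_u \<open>0 < c\<close>, of "-e"] assms(2) by force

lemma lower_bound_from_v:
  assumes "0 \<le> e" "0 < c" and lower: "\<forall>\<^sub>F x in at_infinity. c * norm x powr (-e) \<le> v x"
  shows "\<exists>c'>0. \<forall>\<^sub>F x in at_infinity. c' * norm x powr (-(q * e + \<sigma>1 - \<alpha>)) \<le> u x"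
proof -
  have "\<forall>\<^sub>F y::real^'n in at_infinity. 0 < norm y"
    by (auto simp: eventually_at_infinity intro: exI[of _ 1])
  with lower have "\<forall>\<^sub>F y in at_infinity. c powr q * norm y powr (-(q * e)) \<le> v y powr q"
  proof eventually_elim
    case (elim y)
    have "(c * norm y powr (-e)) powr q \<le> v y powr q"
      using elim \<open>0 < c\<close> q_pos by (intro powr_mono2) auto
    then show ?case using \<open>0 < c\<close> by (simp add: powr_mult powr_powr mult.commute)
  qed
  then obtain c' where "0 < c'" and c': "\<forall>\<^sub>F x in at_infinity.
      ennreal (c' * norm x powr (-(q * e + \<sigma>1 - \<alpha>))) \<le> weighted_riesz_potential \<alpha> \<sigma>1 (\<lambda>y. v y powr q) x"
    using weighted_riesz_potential_lower_bound[of \<alpha> \<sigma>1 "c powr q" "q * e" "\<lambda>y. v y powr q"]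
      \<alpha>_less_dim \<sigma>1 \<open>0 < c\<close> \<open>0 \<le> e\<close> q_pos by auto
  from c' have "\<forall>\<^sub>F x in at_infinity. c' * norm x powr (-(q * e + \<sigma>1 - \<alpha>)) \<le> u x"
  proof eventually_elim
    case (elim x)
    then show ?case using u_pos[of x] by (auto simp: u_eq_potential[symmetric] ennreal_le_iff2)
  qed
  with \<open>0 < c'\<close> show ?thesis by blast
qed

text \<open>
  Passing a lower bound through both equations maps its exponent \<open>e\<close> to
  \<open>q (p e + \<sigma>2 - \<alpha>) + \<sigma>1 - \<alpha>\<close>, which has the fixed point \<open>q0\<close> and slope \<open>p q\<close>.
\<close>

lemma lower_bound_step:
  assumes "0 < c" "\<forall>\<^sub>F x in at_infinity. c * norm x powr (-e) \<le> u x"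
  shows "\<exists>c'>0. \<forall>\<^sub>F x in at_infinity.
           c' * norm x powr (-(q0 \<alpha> \<sigma>1 \<sigma>2 p q - p * q * (q0 \<alpha> \<sigma>1 \<sigma>2 p q - e))) \<le> u x"
proof -
  interpret swapped: weighted_hls_system \<alpha> \<sigma>2 \<sigma>1 q p v u by (rule swapped)
  have "0 \<le> e" using lower_bound_exponent_nonneg assms .
  then obtain c1 where "0 < c1" "\<forall>\<^sub>F x in at_infinity. c1 * norm x powr (-(p * e + \<sigma>2 - \<alpha>)) \<le> v x"
    using swapped.lower_bound_from_v assms by blast
  moreover from this have "0 \<le> p * e + \<sigma>2 - \<alpha>"
    using swapped.lower_bound_exponent_nonneg by blast
  ultimately obtain c2 where "0 < c2"
    "\<forall>\<^sub>F x in at_infinity. c2 * norm x powr (-(q * (p * e + \<sigma>2 - \<alpha>) + \<sigma>1 - \<alpha>)) \<le> u x"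
    using lower_bound_from_v by blast
  moreover have "q * (p * e + \<sigma>2 - \<alpha>) + \<sigma>1 - \<alpha>
      = q0 \<alpha> \<sigma>1 \<sigma>2 p q - p * q * (q0 \<alpha> \<sigma>1 \<sigma>2 p q - e)"
  proof -
    define Q where "Q = q0 \<alpha> \<sigma>1 \<sigma>2 p q"
    have fixed_point: "q * (p * Q + \<sigma>2 - \<alpha>) + \<sigma>1 - \<alpha> = Q"
      using p0_eq[OF pq_gt_1, of \<alpha> \<sigma>1 \<sigma>2] q0_eq[OF pq_gt_1, of \<alpha> \<sigma>1 \<sigma>2] by (simp add: Q_def)
    have "q * (p * e + \<sigma>2 - \<alpha>) + \<sigma>1 - \<alpha> = p * q * e + (q * (p * Q + \<sigma>2 - \<alpha>) + \<sigma>1 - \<alpha>) - p * q * Q"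
      by (simp add: algebra_simps)
    also have "\<dots> = Q - p * q * (Q - e)"
      unfolding fixed_point by (simp add: algebra_simps)
    finally show ?thesis by (simp add: Q_def)
  qed
  ultimately show ?thesis by auto
qed

theorem no_lower_bound_below_q0:
  assumes "\<theta> < q0 \<alpha> \<sigma>1 \<sigma>2 p q" "0 < c"
  shows "\<not> (\<forall>\<^sub>F x in at_infinity. c * norm x powr (-\<theta>) \<le> u x)"
proof
  assume lower: "\<forall>\<^sub>F x in at_infinity. c * norm x powr (-\<theta>) \<le> u x"
  define Q where "Q = q0 \<alpha> \<sigma>1 \<sigma>2 p q"
  have iterate: "\<exists>c>0. \<forall>\<^sub>F x in at_infinity. c * norm x powr (-(Q - (p * q) ^ k * (Q - \<theta>))) \<le> u x"
    for k
  proof (induction k)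
    case 0
    show ?case using lower \<open>0 < c\<close> by auto
  next
    case (Suc k)
    then obtain c' where "0 < c'"
      "\<forall>\<^sub>F x in at_infinity. c' * norm x powr (-(Q - (p * q) ^ k * (Q - \<theta>))) \<le> u x"
      by blast
    then obtain c'' where "0 < c''" "\<forall>\<^sub>F x in at_infinity.
        c'' * norm x powr (-(Q - p * q * (Q - (Q - (p * q) ^ k * (Q - \<theta>))))) \<le> u x"
      using lower_bound_step unfolding Q_def by blast
    moreover have "Q - p * q * (Q - (Q - (p * q) ^ k * (Q - \<theta>))) = Q - (p * q) ^ Suc k * (Q - \<theta>)"
      by (simp add: mult.assoc)
    ultimately show ?case by (metis (no_types))
  qed
  obtain k where "Q / (Q - \<theta>) < (p * q) ^ k"
    using real_arch_pow[OF pq_gt_1] by blast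
  then have "Q - (p * q) ^ k * (Q - \<theta>) < 0"
    using assms(1) by (simp add: Q_def field_simps)
  moreover obtain c' where "0 < c'"
    "\<forall>\<^sub>F x in at_infinity. c' * norm x powr (-(Q - (p * q) ^ k * (Q - \<theta>))) \<le> u x"
    using iterate by blast
  then have "0 \<le> Q - (p * q) ^ k * (Q - \<theta>)" by (rule lower_bound_exponent_nonneg)
  ultimately show False by linarith
qed

lemma no_global_lower_bound_below_q0:
  assumes "\<theta> < q0 \<alpha> \<sigma>1 \<sigma>2 p q" "0 < c"
  shows "\<not> (\<forall>x. c * (1 + norm x) powr (-\<theta>) \<le> u x)"
proof
  assume lower: "\<forall>x. c * (1 + norm x) powr (-\<theta>) \<le> u x"
  have "\<forall>\<^sub>F x in at_infinity. c * 2 powr (-max \<theta> 0) * norm x powr (-max \<theta> 0) \<le> u x"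
    unfolding eventually_at_infinity
  proof (intro exI allI impI)
    fix x :: "real^'n" assume "1 \<le> norm x"
    then have "c * (2 powr (-max \<theta> 0) * norm x powr (-max \<theta> 0)) \<le> c * (1 + norm x) powr (-\<theta>)"
      using \<open>0 < c\<close> by (intro mult_left_mono one_plus_powr_ge) auto
    then show "c * 2 powr (-max \<theta> 0) * norm x powr (-max \<theta> 0) \<le> u x"
      using lower by (simp add: mult.assoc order_trans)
  qed
  moreover have "max \<theta> 0 < q0 \<alpha> \<sigma>1 \<sigma>2 p q" using assms(1) q0_pos by simp
  ultimately show False using no_lower_bound_below_q0 \<open>0 < c\<close> by simp
qed

lemma lower_bound_riesz_kernel:
  "\<exists>c>0. \<forall>\<^sub>F x in at_infinity. c * norm x powr (-(CARD('n) - \<alpha>)) \<le> u x"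
proof -
  interpret swapped: weighted_hls_system \<alpha> \<sigma>2 \<sigma>1 q p v u by (rule swapped)
  have "(\<lambda>y. v y powr q) \<in> borel_measurable lborel" using swapped.u_measurable by measurable
  moreover have "\<And>y. 0 < v y powr q" by (metis powr_gt_zero v_pos less_irrefl)
  ultimately obtain c where "0 < c" and c: "\<forall>\<^sub>F x in at_infinity.
      ennreal (c * norm x powr (-(CARD('n) - \<alpha>))) \<le> weighted_riesz_potential \<alpha> \<sigma>1 (\<lambda>y. v y powr q) x"
    using weighted_riesz_potential_lower_bound_positive[of \<alpha> \<sigma>1 "\<lambda>y. v y powr q"] \<alpha>_less_dim \<sigma>1
    by auto
  from c have "\<forall>\<^sub>F x in at_infinity. c * norm x powr (-(CARD('n) - \<alpha>)) \<le> u x"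
  proof eventually_elim
    case (elim x)
    then show ?case using u_pos[of x] by (auto simp: u_eq_potential[symmetric] ennreal_le_iff2)
  qed
  with \<open>0 < c\<close> show ?thesis by blast
qed


lemma p0_less_of_decay:
  assumes "q0 \<alpha> \<sigma>1 \<sigma>2 p q < \<theta>" "0 < C"
    and upper: "\<forall>\<^sub>F x in at_infinity. u x \<le> C * norm x powr (-\<theta>)"
  shows "p0 \<alpha> \<sigma>1 \<sigma>2 p q < CARD('n) - \<alpha>"
proof (rule ccontr)
  interpret swapped: weighted_hls_system \<alpha> \<sigma>2 \<sigma>1 q p v u by (rule swapped)
  define P where "P = p0 \<alpha> \<sigma>1 \<sigma>2 p q"
  assume "\<not> P < CARD('n) - \<alpha>"
  obtain c where "0 < c" and c: "\<forall>\<^sub>F x in at_infinity. c * norm x powr (-(CARD('n) - \<alpha>)) \<le> v x"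
    using swapped.lower_bound_riesz_kernel by blast
  have "\<forall>\<^sub>F x::real^'n in at_infinity. 1 \<le> norm x"
    by (auto simp: eventually_at_infinity)
  with c have "\<forall>\<^sub>F x in at_infinity. c * norm x powr (-P) \<le> v x"
  proof eventually_elim
    case (elim x)
    have "norm x powr (-P) \<le> norm x powr (-(CARD('n) - \<alpha>))"
      using elim \<open>\<not> P < CARD('n) - \<alpha>\<close> by (intro powr_mono) auto
    then have "c * norm x powr (-P) \<le> c * norm x powr (-(CARD('n) - \<alpha>))"
      using \<open>0 < c\<close> by simp
    then show ?case using elim by linarith
  qed
  moreover have "0 \<le> P" using swapped.q0_pos by (simp add: P_def q0_swap)
  ultimately obtain c' where "0 < c'"
    and lower: "\<forall>\<^sub>F x in at_infinity. c' * norm x powr (-(q * P + \<sigma>1 - \<alpha>)) \<le> u x"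
    using lower_bound_from_v \<open>0 < c\<close> by blast
  from lower upper have "\<forall>\<^sub>F x::real^'n in at_infinity.
      c' * norm x powr (-q0 \<alpha> \<sigma>1 \<sigma>2 p q) \<le> C * norm x powr (-\<theta>)"
    by eventually_elim (simp add: P_def q0_eq[OF pq_gt_1])
  then have "\<theta> \<le> q0 \<alpha> \<sigma>1 \<sigma>2 p q"
    using eventually_powr_le_powr_imp_le \<open>0 < c'\<close> \<open>0 < C\<close> by blast
  with assms(1) show False by simp
qed

lemma u_in_Lr0_of_decay:
  assumes "q0 \<alpha> \<sigma>1 \<sigma>2 p q < \<theta>"
    and upper: "\<forall>\<^sub>F x in at_infinity. u x \<le> C * norm x powr (-\<theta>)"
  shows "(\<integral>\<^sup>+x. ennreal (\<bar>u x\<bar> powr (CARD('n) / q0 \<alpha> \<sigma>1 \<sigma>2 p q)) \<partial>lborel) < \<infinity>"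
proof (rule nn_integral_abs_powr_finite_if_bounded_decay[OF bounded_u])
  show "0 < CARD('n) / q0 \<alpha> \<sigma>1 \<sigma>2 p q" using q0_pos by simp
  show "real DIM(real^'n) < \<theta> * (CARD('n) / q0 \<alpha> \<sigma>1 \<sigma>2 p q)"
    using assms(1) q0_pos by (simp add: field_simps)
  show "\<forall>\<^sub>F x in at_infinity. \<bar>u x\<bar> \<le> C * norm x powr (-\<theta>)"
    using upper by eventually_elim (simp add: abs_of_pos u_pos)
qed

lemma v_in_Ls0_of_decay:
  assumes "q0 \<alpha> \<sigma>1 \<sigma>2 p q < \<theta>" "0 < C"
    and upper: "\<forall>\<^sub>F x in at_infinity. u x \<le> C * norm x powr (-\<theta>)"
  shows "(\<integral>\<^sup>+x. ennreal (\<bar>v x\<bar> powr (CARD('n) / p0 \<alpha> \<sigma>1 \<sigma>2 p q)) \<partial>lborel) < \<infinity>"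
proof -
  interpret swapped: weighted_hls_system \<alpha> \<sigma>2 \<sigma>1 q p v u by (rule swapped)
  define P where "P = p0 \<alpha> \<sigma>1 \<sigma>2 p q"
  have P: "0 < P" using swapped.q0_pos by (simp add: P_def q0_swap)
  have "p * q0 \<alpha> \<sigma>1 \<sigma>2 p q < p * \<theta>" using assms(1) p_pos by simp
  then have "P < p * \<theta> + \<sigma>2 - \<alpha>"
    using p0_eq[OF pq_gt_1, of \<alpha> \<sigma>1 \<sigma>2] by (simp add: P_def)
  moreover have "P < CARD('n) - \<alpha>" using p0_less_of_decay assms by (simp add: P_def)
  ultimately have "P < min (p * \<theta> + \<sigma>2 - \<alpha>) (CARD('n) - \<alpha>)" by simp
  then obtain \<gamma> where "P < \<gamma>" "\<gamma> < min (p * \<theta> + \<sigma>2 - \<alpha>) (CARD('n) - \<alpha>)"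
    using dense by blast
  then have \<gamma>: "P < \<gamma>" "\<gamma> < p * \<theta> + \<sigma>2 - \<alpha>" "\<gamma> < CARD('n) - \<alpha>" by simp_all
  define a where "a = \<gamma> + \<alpha> - \<sigma>2"
  have "\<forall>\<^sub>F x::real^'n in at_infinity. 1 \<le> norm x"
    by (auto simp: eventually_at_infinity)
  with upper have u_decay: "\<forall>\<^sub>F x in at_infinity. \<bar>u x powr p\<bar> \<le> C powr p * norm x powr (-a)"
  proof eventually_elim
    case (elim x)
    have "u x powr p \<le> (C * norm x powr (-\<theta>)) powr p"
      using elim u_pos[of x] p_pos by (intro powr_mono2) auto
    also have "\<dots> = C powr p * norm x powr (-(p * \<theta>))"
      using \<open>0 < C\<close> by (simp add: powr_mult powr_powr mult.commute)
    also have "\<dots> \<le> C powr p * norm x powr (-a)"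
      using elim \<gamma> by (intro mult_left_mono powr_mono) (auto simp: a_def)
    finally show ?case by simp
  qed
  have u_bounded: "bounded (range (\<lambda>x. u x powr p))"
    using bounded_range_abs_powr[OF bounded_u, of p] p_pos u_pos by (simp add: abs_of_pos)
  have a: "0 \<le> a" "\<alpha> < a + \<sigma>2" "a + \<sigma>2 < DIM(real^'n)"
    using \<gamma> P \<sigma>2 by (simp_all add: a_def)
  obtain C' where "0 \<le> C'" and C': "\<And>y. y \<noteq> 0 \<Longrightarrow> \<bar>u y powr p\<bar> \<le> C' * norm y powr (-a)"
    using bounded_decay_imp_decay_everywhere[OF u_bounded a(1) u_decay] by blast
  have u_powr_bound: "u y powr p \<le> C' * norm y powr (-a)" if "y \<noteq> 0" for y
    using C'[OF that] by simp
  obtain K where K: "\<And>x. x \<noteq> 0 \<Longrightarrow>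
      weighted_riesz_potential \<alpha> \<sigma>2 (\<lambda>y. u y powr p) x \<le> ennreal (K * norm x powr (-(a + \<sigma>2 - \<alpha>)))"
    using weighted_riesz_potential_upper_bound[OF \<alpha>_pos a(2,3) \<sigma>2(1) \<open>0 \<le> C'\<close> u_powr_bound]
    by blast
  have "\<forall>\<^sub>F x in at_infinity. \<bar>v x\<bar> \<le> K * norm x powr (-\<gamma>)"
    unfolding eventually_at_infinity
  proof (intro exI allI impI)
    fix x :: "real^'n" assume "1 \<le> norm x"
    then have "x \<noteq> 0" by auto
    then have "ennreal (v x) \<le> ennreal (K * norm x powr (-\<gamma>))"
      using K[of x] by (simp add: swapped.u_eq_potential a_def)
    then show "\<bar>v x\<bar> \<le> K * norm x powr (-\<gamma>)"
      using v_pos[of x] by (auto simp: ennreal_le_iff2)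
  qed
  moreover have "0 < CARD('n) / P" using P by simp
  moreover have "real DIM(real^'n) < \<gamma> * (CARD('n) / P)"
    using \<gamma> P by (simp add: field_simps)
  ultimately show ?thesis
    using nn_integral_abs_powr_finite_if_bounded_decay[OF bounded_v] by (simp add: P_def)
qed

theorem no_upper_bound_above_q0:
  assumes "\<not> integrable_solution \<alpha> \<sigma>1 \<sigma>2 p q u v" "q0 \<alpha> \<sigma>1 \<sigma>2 p q < \<theta>" "0 < C"
  shows "\<not> (\<forall>\<^sub>F x in at_infinity. u x \<le> C * norm x powr (-\<theta>))"
proof
  assume "\<forall>\<^sub>F x in at_infinity. u x \<le> C * norm x powr (-\<theta>)"
  then have "integrable_solution \<alpha> \<sigma>1 \<sigma>2 p q u v"
    unfolding integrable_solution_def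
    using u_in_Lr0_of_decay[OF assms(2)] v_in_Ls0_of_decay[OF assms(2,3)] by blast
  with assms(1) show False ..
qed

lemma no_global_upper_bound_above_q0:
  assumes "\<not> integrable_solution \<alpha> \<sigma>1 \<sigma>2 p q u v" "q0 \<alpha> \<sigma>1 \<sigma>2 p q < \<theta>" "0 < C"
  shows "\<not> (\<forall>x. u x \<le> C * (1 + norm x) powr (-\<theta>))"
proof
  assume upper: "\<forall>x. u x \<le> C * (1 + norm x) powr (-\<theta>)"
  have "\<forall>\<^sub>F x in at_infinity. u x \<le> C * norm x powr (-\<theta>)"
    unfolding eventually_at_infinity
  proof (intro exI allI impI)
    fix x :: "real^'n" assume "1 \<le> norm x"
    then have "(1 + norm x) powr (-\<theta>) \<le> norm x powr (-\<theta>)"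
      using assms(2) q0_pos by (intro powr_mono2') auto
    then show "u x \<le> C * norm x powr (-\<theta>)"
      using upper[rule_format, of x] \<open>0 < C\<close> by (simp add: order_trans)
  qed
  then show False using no_upper_bound_above_q0 assms by blast
qed

lemma comparable_exponent_eq_q0:
  assumes "\<not> integrable_solution \<alpha> \<sigma>1 \<sigma>2 p q u v"
    and "asymp_comparable u (\<lambda>x. norm x powr (-\<theta>))"
  shows "\<theta> = q0 \<alpha> \<sigma>1 \<sigma>2 p q"
proof -
  obtain c C where "0 < c" "0 < C"
    and lower: "\<forall>\<^sub>F x in at_infinity. c * norm x powr (-\<theta>) \<le> u x"
    and upper: "\<forall>\<^sub>F x in at_infinity. u x \<le> C * norm x powr (-\<theta>)"
    using assms(2) unfolding asymp_comparable_def eventually_conj_iff by blast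
  show ?thesis
  proof (rule ccontr)
    assume "\<theta> \<noteq> q0 \<alpha> \<sigma>1 \<sigma>2 p q"
    then consider "\<theta> < q0 \<alpha> \<sigma>1 \<sigma>2 p q" | "q0 \<alpha> \<sigma>1 \<sigma>2 p q < \<theta>" by linarith
    then show False
    proof cases
      case 1
      then show False using no_lower_bound_below_q0 \<open>0 < c\<close> lower by blast
    next
      case 2
      then show False using no_upper_bound_above_q0[OF assms(1)] \<open>0 < C\<close> upper by blast
    qed
  qed
qed

lemma no_global_lower_bounds:
  assumes "\<theta>1 < q0 \<alpha> \<sigma>1 \<sigma>2 p q" "\<theta>2 < p0 \<alpha> \<sigma>1 \<sigma>2 p q"
  shows "\<not> (\<exists>c>0. (\<forall>x. u x \<ge> c * (1 + norm x) powr (-\<theta>1)) \<or>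
           (\<forall>x. v x \<ge> c * (1 + norm x) powr (-\<theta>2)))"
proof -
  interpret swapped: weighted_hls_system \<alpha> \<sigma>2 \<sigma>1 q p v u by (rule swapped)
  show ?thesis
    using no_global_lower_bound_below_q0[OF assms(1)]
      swapped.no_global_lower_bound_below_q0[of \<theta>2] assms(2)
    by (auto simp: q0_swap[of \<alpha> \<sigma>2 \<sigma>1 q p])
qed

lemma no_global_upper_bounds:
  assumes "\<not> integrable_solution \<alpha> \<sigma>1 \<sigma>2 p q u v"
    and "q0 \<alpha> \<sigma>1 \<sigma>2 p q < \<theta>3" "p0 \<alpha> \<sigma>1 \<sigma>2 p q < \<theta>4"
  shows "\<not> (\<exists>C>0. (\<forall>x. u x \<le> C * (1 + norm x) powr (-\<theta>3)) \<or>
           (\<forall>x. v x \<le> C * (1 + norm x) powr (-\<theta>4)))"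
proof -
  interpret swapped: weighted_hls_system \<alpha> \<sigma>2 \<sigma>1 q p v u by (rule swapped)
  show ?thesis
    using no_global_upper_bound_above_q0[OF assms(1,2)]
      swapped.no_global_upper_bound_above_q0[of \<theta>4] assms(1,3)
    by (auto simp: q0_swap[of \<alpha> \<sigma>2 \<sigma>1 q p] integrable_solution_swap[of \<alpha> \<sigma>2 \<sigma>1 q p v u])
qed

lemma decay_rates:
  assumes "\<not> integrable_solution \<alpha> \<sigma>1 \<sigma>2 p q u v" "decaying_solution u v"
  shows "asymp_comparable u (\<lambda>x. norm x powr (- q0 \<alpha> \<sigma>1 \<sigma>2 p q)) \<and>
         asymp_comparable v (\<lambda>x. norm x powr (- p0 \<alpha> \<sigma>1 \<sigma>2 p q))"
proof -
  interpret swapped: weighted_hls_system \<alpha> \<sigma>2 \<sigma>1 q p v u by (rule swapped)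
  obtain \<theta>1 \<theta>2 where "asymp_comparable u (\<lambda>x. norm x powr (-\<theta>1))"
    "asymp_comparable v (\<lambda>x. norm x powr (-\<theta>2))"
    using assms(2) unfolding decaying_solution_def by blast
  moreover from this have "\<theta>1 = q0 \<alpha> \<sigma>1 \<sigma>2 p q" "\<theta>2 = p0 \<alpha> \<sigma>1 \<sigma>2 p q"
    using comparable_exponent_eq_q0 swapped.comparable_exponent_eq_q0 assms(1)
    by (auto simp: q0_swap[of \<alpha> \<sigma>2 \<sigma>1 q p] integrable_solution_swap[of \<alpha> \<sigma>2 \<sigma>1 q p v u])
  ultimately show ?thesis by simp
qed

end

theorem theorem1p5:
  fixes u v :: "real^'n \<Rightarrow> real" and p q \<alpha> \<sigma>1 \<sigma>2 :: real
  assumes "CARD('n) \<ge> 3"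
    and "p > 0" and "q > 0" and "p * q > 1"
    and "0 < \<alpha>" and "\<alpha> < real CARD('n)"
    and "0 \<le> \<sigma>1" and "\<sigma>1 < \<alpha>" and "0 \<le> \<sigma>2" and "\<sigma>2 < \<alpha>"
    and "bounded (range u)" and "bounded (range v)"
    and "\<forall>x. u x > 0" and "\<forall>x. v x > 0"
    and "is_solution \<alpha> \<sigma>1 \<sigma>2 p q u v"
  shows "(\<forall>\<theta>1 \<theta>2. \<theta>1 < q0 \<alpha> \<sigma>1 \<sigma>2 p q \<longrightarrow> \<theta>2 < p0 \<alpha> \<sigma>1 \<sigma>2 p q \<longrightarrow>
            \<not> (\<exists>c>0. (\<forall>x. u x \<ge> c * (1 + norm x) powr (-\<theta>1)) \<or>
                     (\<forall>x. v x \<ge> c * (1 + norm x) powr (-\<theta>2))))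
       \<and> (\<not> integrable_solution \<alpha> \<sigma>1 \<sigma>2 p q u v \<longrightarrow>
          (\<forall>\<theta>3 \<theta>4. \<theta>3 > q0 \<alpha> \<sigma>1 \<sigma>2 p q \<longrightarrow> \<theta>4 > p0 \<alpha> \<sigma>1 \<sigma>2 p q \<longrightarrow>
            \<not> (\<exists>C>0. (\<forall>x. u x \<le> C * (1 + norm x) powr (-\<theta>3)) \<or>
                     (\<forall>x. v x \<le> C * (1 + norm x) powr (-\<theta>4)))))
       \<and> (\<not> integrable_solution \<alpha> \<sigma>1 \<sigma>2 p q u v \<and> decaying_solution u v \<longrightarrow>
            asymp_comparable u (\<lambda>x. norm x powr (- q0 \<alpha> \<sigma>1 \<sigma>2 p q)) \<and>
            asymp_comparable v (\<lambda>x. norm x powr (- p0 \<alpha> \<sigma>1 \<sigma>2 p q)))"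
proof -
  interpret weighted_hls_system \<alpha> \<sigma>1 \<sigma>2 p q u v
    using assms by unfold_locales auto
  show ?thesis
    using no_global_lower_bounds no_global_upper_bounds decay_rates by blast
qed

end
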